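(* There exists a system $\dot x=f(x,u)$, $y=h(x)$, with $f:\mathbb{R}^n\times\mathbb{R}^m\to\mathbb{R}^n$ and $h:\mathbb{R}^n\to\mathbb{R}^p$ locally Lipschitz, $f(0,0)=0$, $h(0)=0$, which is ROS but not IOS.
   Context: Inputs are measurable, locally essentially bounded functions $u:[0,\infty)\to\mathbb{R}^m$; $\|u\|$ is the essential supremum of $|u(t)|$ (Euclidean norm). $x(\cdot,\xi,u)$ denotes the maximal solution of $\dot x=f(x,u)$, $x(0)=\xi$, and $y(t,\xi,u)=h(x(t,\xi,u))$. The system is forward complete if all such solutions are defined on $[0,\infty)$. Classes: $\mathcal{K}$ = continuous strictly increasing $\gamma:[0,\infty)\to[0,\infty)$ with $\gamma(0)=0$; $\mathcal{K}_\infty$ = unbounded $\mathcal{K}$ functions; $\mathcal{KL}$ = functions $\beta(s,t)$ of class $\mathcal{K}$ in $s$ and decreasing to $0$ in $t$. IOS: the system is forward complete and there exist $\beta\in\mathcal{KL}$, $\gamma\in\mathcal{K}$ with $|y(t,\xi,u)|\le\beta(|\xi|,t)+\gamma(\|u\|)$ for all $t\ge0$, $u$, $\xi$. ROS: the system is forward complete and there exists a smooth $\lambda\in\mathcal{K}_\infty$ such that the system $\dot x=f(x,d\,\lambda(|h(x)|))$, $y=h(x)$, with inputs $d$ measurable locally essentially bounded taking values in the closed unit ball of $\mathbb{R}^m$, is forward complete, and there exists $\beta\in\mathcal{KL}$ with $|y_\lambda(t,\xi,d)|\le\beta(|\xi|,t)$ for all $t\ge0$, $\xi$, $d$, where $y_\lambda(\cdot,\xi,d)$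 is the output of this closed-loop system from $\xi$ under $d$. *)

theory Defs
  imports "HOL-Analysis.Analysis" "HOL-Probability.Essential_Supremum"
begin

section \<open>Comparison functions (only values on [0,inf) matter)\<close>

definition class_K :: "(real \<Rightarrow> real) \<Rightarrow> bool" where
  "class_K g \<longleftrightarrow> continuous_on {0..} g \<and> strict_mono_on {0..} g \<and> g 0 = 0 \<and> (\<forall>s\<ge>0. g s \<ge> 0)"

definition class_Kinf :: "(real \<Rightarrow> real) \<Rightarrow> bool" where
  "class_Kinf g \<longleftrightarrow> class_K g \<and> (\<forall>M. \<exists>s\<ge>0. g s > M)"

definition class_KL :: "(real \<Rightarrow> real \<Rightarrow> real) \<Rightarrow> bool" where
  "class_KL b \<longleftrightarrow> (\<forall>t\<ge>0. class_K (\<lambda>s. b s t)) \<and>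
     (\<forall>s\<ge>0. antimono_on {0..} (b s) \<and> ((b s) \<longlongrightarrow> 0) at_top)"

definition smooth_nonneg :: "(real \<Rightarrow> real) \<Rightarrow> bool" where
  "smooth_nonneg g \<longleftrightarrow> (\<exists>D :: nat \<Rightarrow> real \<Rightarrow> real. D 0 = g \<and>
     (\<forall>k. \<forall>s\<ge>0. (D k has_real_derivative D (Suc k) s) (at s within {0..})))"

definition loc_lipschitz :: "('a::metric_space \<Rightarrow> 'b::metric_space) \<Rightarrow> bool" where
  "loc_lipschitz g \<longleftrightarrow> (\<forall>z. \<exists>r>0. \<exists>L. L-lipschitz_on (cball z r) g)"

definition admissible_input :: "(real \<Rightarrow> 'u::euclidean_space) \<Rightarrow> bool" where
  "admissible_input u \<longleftrightarrow> u \<in> borel_measurable (restrict_space lborel {0..}) \<and>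
     (\<forall>T\<ge>0. \<exists>B. AE t in lborel. t \<in> {0..T} \<longrightarrow> norm (u t) \<le> B)"

definition input_norm :: "(real \<Rightarrow> 'u::euclidean_space) \<Rightarrow> ereal" where
  "input_norm u = esssup (restrict_space lborel {0..}) (\<lambda>t. ereal (norm (u t)))"

definition is_solution_on ::
  "('x::euclidean_space \<Rightarrow> 'u \<Rightarrow> 'x) \<Rightarrow> (real \<Rightarrow> 'u) \<Rightarrow> 'x \<Rightarrow> ereal \<Rightarrow> (real \<Rightarrow> 'x) \<Rightarrow> bool" where
  "is_solution_on f u \<xi> T x \<longleftrightarrow> x 0 = \<xi> \<and> continuous_on {t. 0 \<le> t \<and> ereal t < T} x \<and>
     (\<forall>t. 0 \<le> t \<and> ereal t < T \<longrightarrow> ((\<lambda>s. f (x s) (u s)) has_integral (x t - \<xi>)) {0..t})"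

text \<open>Forward completeness w.r.t. a class of admissible inputs: every solution can be
  continued to [0,inf), i.e. the maximal solution is defined on [0,inf).  We phrase this as:
  every solution on some [0,T) is the restriction of a solution on [0,inf).\<close>
definition forward_complete_wrt ::
  "((real \<Rightarrow> 'u) \<Rightarrow> bool) \<Rightarrow> ('x::euclidean_space \<Rightarrow> 'u \<Rightarrow> 'x) \<Rightarrow> bool" where
  "forward_complete_wrt Adm f \<longleftrightarrow> (\<forall>u \<xi>. Adm u \<longrightarrow>
     (\<exists>x. is_solution_on f u \<xi> \<infinity> x) \<and>
     (\<forall>T x. is_solution_on f u \<xi> T x \<longrightarrow>
        (\<exists>x'. is_solution_on f u \<xi> \<infinity> x' \<and> (\<forall>t. 0 \<le> t \<and> ereal t < T \<longrightarrow> x' t = x t))))"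

definition forward_complete :: "('x::euclidean_space \<Rightarrow> 'u::euclidean_space \<Rightarrow> 'x) \<Rightarrow> bool" where
  "forward_complete f \<longleftrightarrow> forward_complete_wrt admissible_input f"

definition IOS :: "('x::euclidean_space \<Rightarrow> 'u::euclidean_space \<Rightarrow> 'x) \<Rightarrow> ('x \<Rightarrow> 'y::euclidean_space) \<Rightarrow> bool" where
  "IOS f h \<longleftrightarrow> forward_complete f \<and>
     (\<exists>\<beta> \<gamma>. class_KL \<beta> \<and> class_K \<gamma> \<and>
       (\<forall>u \<xi> x t. admissible_input u \<longrightarrow> input_norm u < \<infinity> \<longrightarrow>
          is_solution_on f u \<xi> \<infinity> x \<longrightarrow> t \<ge> 0 \<longrightarrow>
          norm (h (x t)) \<le> \<beta> (norm \<xi>) t + \<gamma> (real_of_ereal (input_norm u))))"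

definition admissible_dist :: "(real \<Rightarrow> 'u::euclidean_space) \<Rightarrow> bool" where
  "admissible_dist d \<longleftrightarrow> admissible_input d \<and> (\<forall>t\<ge>0. norm (d t) \<le> 1)"

definition ROS :: "('x::euclidean_space \<Rightarrow> 'u::euclidean_space \<Rightarrow> 'x) \<Rightarrow> ('x \<Rightarrow> 'y::euclidean_space) \<Rightarrow> bool" where
  "ROS f h \<longleftrightarrow> forward_complete f \<and>
     (\<exists>lam. class_Kinf lam \<and> smooth_nonneg lam \<and>
        (let fcl = (\<lambda>x d. f x (lam (norm (h x)) *\<^sub>R d)) in
          forward_complete_wrt admissible_dist fcl \<and>
          (\<exists>\<beta>. class_KL \<beta> \<and>
            (\<forall>d \<xi> x t. admissible_dist d \<longrightarrow> is_solution_on fcl d \<xi> \<infinity> x \<longrightarrow> t \<ge> 0 \<longrightarrow>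
               norm (h (x t)) \<le> \<beta> (norm \<xi>) t))))"

end

(*
  In the plane, z' = i z - |z|^2 z rotates with unit angular speed while |z| decays like
  |z0| / sqrt (1 + 2 |z0|^2 t); its vector field is dissipative, so solutions are unique.
  The third state integrates u times the negative part of x1, and the output x3^2 * max x1 0
  only sees x3 while x1 > 0.  Under any feedback u = lam(|y|) d with lam 0 = 0 the input term
  therefore vanishes identically (y <> 0 forces x1 > 0): x3 stays constant and
  |y(t)| <= |xi|^3 / sqrt (1 + 2 |xi|^2 t), so the system is ROS.  With u = 1 and xi = (1,0,0),
  however, x1 = cos t / sqrt (1 + 2 t), so x3 grows like sqrt t and y(2 n pi) = x3^2 / sqrt (1 + 4 n pi)
  is unbounded, which rules out any IOS estimate.
*)

theory Submission
  imports Defs "HOL-Real_Asymp.Real_Asymp"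
begin

lemma lipschitz_on_UNIV_imp_loc_lipschitz: "L-lipschitz_on UNIV f \<Longrightarrow> loc_lipschitz f"
  unfolding loc_lipschitz_def using lipschitz_on_subset[of L UNIV f] zero_less_one by blast

lemma loc_lipschitz_const: "loc_lipschitz (\<lambda>x. c)"
  by (rule lipschitz_on_UNIV_imp_loc_lipschitz[OF lipschitz_on_constant])

lemma bounded_linear_imp_loc_lipschitz: "bounded_linear f \<Longrightarrow> loc_lipschitz f"
  by (metis bounded_linear.lipschitz_boundE lipschitz_on_UNIV_imp_loc_lipschitz)

lemma loc_lipschitz_max_0: "loc_lipschitz (\<lambda>x::real. max x 0)"
  by (rule lipschitz_on_UNIV_imp_loc_lipschitz[of 1]) (auto intro!: lipschitz_onI simp: dist_real_def max_def)

lemma loc_lipschitz_common_cball: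
  assumes "loc_lipschitz f" "loc_lipschitz g"
  obtains r L M where "r > 0" "L-lipschitz_on (cball z r) f" "M-lipschitz_on (cball z r) g"
proof -
  obtain r L where r: "r > 0" "L-lipschitz_on (cball z r) f"
    using assms(1) unfolding loc_lipschitz_def by blast
  obtain s M where s: "s > 0" "M-lipschitz_on (cball z s) g"
    using assms(2) unfolding loc_lipschitz_def by blast
  have "cball z (min r s) \<subseteq> cball z r" "cball z (min r s) \<subseteq> cball z s"
    by (simp_all add: subset_cball)
  with r s show ?thesis
    by (intro that[of "min r s"]) (auto intro: lipschitz_on_subset)
qed

lemma loc_lipschitz_add:
  fixes f g :: "'a::metric_space \<Rightarrow> 'b::real_normed_vector"
  assumes "loc_lipschitz f" "loc_lipschitz g"
  shows "loc_lipschitz (\<lambda>x. f x + g x)"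
  unfolding loc_lipschitz_def
proof
  fix z
  obtain r L M where r: "r > 0" and f: "L-lipschitz_on (cball z r) f" and g: "M-lipschitz_on (cball z r) g"
    using loc_lipschitz_common_cball[OF assms] .
  from lipschitz_on_add[OF f g] r show "\<exists>r>0. \<exists>L. L-lipschitz_on (cball z r) (\<lambda>x. f x + g x)"
    by blast
qed

lemma loc_lipschitz_diff:
  fixes f g :: "'a::metric_space \<Rightarrow> 'b::real_normed_vector"
  assumes "loc_lipschitz f" "loc_lipschitz g"
  shows "loc_lipschitz (\<lambda>x. f x - g x)"
  unfolding loc_lipschitz_def
proof
  fix z
  obtain r L M where r: "r > 0" and f: "L-lipschitz_on (cball z r) f" and g: "M-lipschitz_on (cball z r) g"
    using loc_lipschitz_common_cball[OF assms] .
  from lipschitz_on_diff[OF f g] r show "\<exists>r>0. \<exists>L. L-lipschitz_on (cball z r) (\<lambda>x. f x - g x)"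
    by blast
qed

lemma loc_lipschitz_compose:
  assumes f: "loc_lipschitz f" and g: "loc_lipschitz g"
  shows "loc_lipschitz (\<lambda>x. g (f x))"
  unfolding loc_lipschitz_def
proof
  fix z
  obtain r L where r: "r > 0" and Lf: "L-lipschitz_on (cball z r) f"
    using f unfolding loc_lipschitz_def by blast
  obtain s M where s: "s > 0" and Mg: "M-lipschitz_on (cball (f z) s) g"
    using g unfolding loc_lipschitz_def by blast
  have L: "0 \<le> L" using lipschitz_on_nonneg[OF Lf] .
  define \<rho> where "\<rho> = min r (s / (L + 1))"
  have \<rho>: "\<rho> > 0" using r s L by (simp add: \<rho>_def)
  have sub: "cball z \<rho> \<subseteq> cball z r" by (simp add: \<rho>_def subset_cball)
  have "f ` cball z \<rho> \<subseteq> cball (f z) s"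
  proof clarify
    fix x assume x: "x \<in> cball z \<rho>"
    have "dist (f z) (f x) \<le> L * dist z x"
      using lipschitz_onD[OF Lf] x sub r by auto
    also have "\<dots> \<le> (L + 1) * (s / (L + 1))"
      using x L by (intro mult_mono) (auto simp: \<rho>_def)
    finally show "f x \<in> cball (f z) s" using L by simp
  qed
  then have "(M * L)-lipschitz_on (cball z \<rho>) (g \<circ> f)"
    using lipschitz_on_compose[OF lipschitz_on_subset[OF Lf sub]] lipschitz_on_subset[OF Mg] by blast
  then show "\<exists>r>0. \<exists>L. L-lipschitz_on (cball z r) (\<lambda>x. g (f x))"
    using \<rho> by (auto simp: o_def)
qed

lemma lipschitz_on_cball_norm_bound:
  assumes "L-lipschitz_on (cball z r) f" "x \<in> cball z r"
  shows "norm (f x) \<le> norm (f z) + L * r"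
proof -
  have "z \<in> cball z r" using assms(2) by (auto intro: order_trans[OF zero_le_dist])
  then have "dist (f x) (f z) \<le> L * dist x z"
    using lipschitz_onD[OF assms(1) assms(2)] by auto
  also have "\<dots> \<le> L * r"
    using assms lipschitz_on_nonneg by (auto simp: dist_commute intro: mult_left_mono)
  finally show ?thesis using norm_triangle_ineq2[of "f x" "f z"] by (simp add: dist_norm)
qed

lemma loc_lipschitz_bilinear:
  fixes f :: "'a::metric_space \<Rightarrow> 'b::real_normed_vector" and g :: "'a \<Rightarrow> 'c::real_normed_vector"
  assumes mul: "bounded_bilinear mul" and "loc_lipschitz f" "loc_lipschitz g"
  shows "loc_lipschitz (\<lambda>x. mul (f x) (g x))"
  unfolding loc_lipschitz_def
proof
  fix z
  obtain r L M where r: "r > 0" and f: "L-lipschitz_on (cball z r) f" and g: "M-lipschitz_on (cball z r) g"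
    using loc_lipschitz_common_cball[OF assms(2,3)] .
  obtain K where K: "\<And>a b. norm (mul a b) \<le> norm a * norm b * K" "K > 0"
    using bounded_bilinear.pos_bounded[OF mul] by blast
  define A where "A = norm (f z) + L * r"
  define B where "B = norm (g z) + M * r"
  have LM: "0 \<le> L" "0 \<le> M" using f g by (auto dest: lipschitz_on_nonneg)
  then have AB: "0 \<le> A" "0 \<le> B" using r by (simp_all add: A_def B_def)
  have "(K * (L * B + A * M))-lipschitz_on (cball z r) (\<lambda>x. mul (f x) (g x))"
  proof (rule lipschitz_onI)
    fix x y assume xy: "x \<in> cball z r" "y \<in> cball z r"
    have fxy: "norm (f x - f y) \<le> L * dist x y" and gxy: "norm (g x - g y) \<le> M * dist x y"
      using lipschitz_onD[OF f xy] lipschitz_onD[OF g xy] by (simp_all add: dist_norm)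
    have gx: "norm (g x) \<le> B" and fy: "norm (f y) \<le> A"
      unfolding A_def B_def by (intro lipschitz_on_cball_norm_bound f g xy)+
    have "mul (f x) (g x) - mul (f y) (g y) = mul (f x - f y) (g x) + mul (f y) (g x - g y)"
      by (simp add: bounded_bilinear.diff_left[OF mul] bounded_bilinear.diff_right[OF mul])
    then have "dist (mul (f x) (g x)) (mul (f y) (g y))
        \<le> norm (mul (f x - f y) (g x)) + norm (mul (f y) (g x - g y))"
      by (simp add: dist_norm norm_triangle_ineq)
    also have "\<dots> \<le> norm (f x - f y) * norm (g x) * K + norm (f y) * norm (g x - g y) * K"
      by (rule add_mono[OF K(1) K(1)])
    also have "\<dots> \<le> (L * dist x y) * B * K + A * (M * dist x y) * K"
      using K(2) LM AB fxy gxy gx fy by (intro add_mono mult_right_mono mult_mono) simp_all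
    finally show "dist (mul (f x) (g x)) (mul (f y) (g y)) \<le> K * (L * B + A * M) * dist x y"
      by (simp add: algebra_simps)
  next
    show "0 \<le> K * (L * B + A * M)" using K(2) LM AB by simp
  qed
  with r show "\<exists>r>0. \<exists>L. L-lipschitz_on (cball z r) (\<lambda>x. mul (f x) (g x))" by blast
qed

lemma loc_lipschitz_sum:
  fixes f :: "'i \<Rightarrow> 'a::metric_space \<Rightarrow> 'b::real_normed_vector"
  assumes "finite I" "\<And>i. i \<in> I \<Longrightarrow> loc_lipschitz (f i)"
  shows "loc_lipschitz (\<lambda>x. \<Sum>i\<in>I. f i x)"
  using assms
proof (induction I rule: finite_induct)
  case empty
  show ?case by (simp add: loc_lipschitz_const)
next
  case (insert i I)
  then show ?case by (simp add: loc_lipschitz_add)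
qed

lemma loc_lipschitz_componentwise:
  fixes f :: "'a::metric_space \<Rightarrow> 'b::euclidean_space"
  assumes "\<And>b. b \<in> Basis \<Longrightarrow> loc_lipschitz (\<lambda>x. f x \<bullet> b)"
  shows "loc_lipschitz f"
proof -
  have "loc_lipschitz (\<lambda>x. \<Sum>b\<in>Basis. (f x \<bullet> b) *\<^sub>R b)"
    by (intro loc_lipschitz_sum loc_lipschitz_bilinear[OF bounded_bilinear_scaleR]
        loc_lipschitz_const assms finite_Basis)
  then show ?thesis by (simp add: euclidean_representation)
qed

lemma loc_lipschitz_vec_componentwise:
  fixes f :: "'a::metric_space \<Rightarrow> real ^ 'n"
  assumes "\<And>i. loc_lipschitz (\<lambda>x. f x $ i)"
  shows "loc_lipschitz f"
proof (rule loc_lipschitz_componentwise)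
  fix b :: "real ^ 'n" assume "b \<in> Basis"
  then obtain i where "b = axis i 1" by (auto simp: Basis_vec_def)
  then show "loc_lipschitz (\<lambda>x. f x \<bullet> b)" using assms[of i] by (simp add: inner_axis)
qed

lemma continuous_on_vec_componentwise:
  fixes f :: "'a::topological_space \<Rightarrow> 'b::topological_space ^ 'n"
  shows "(\<And>i. continuous_on S (\<lambda>x. f x $ i)) \<Longrightarrow> continuous_on S f"
  using continuous_on_vec_lambda[of S "\<lambda>i x. f x $ i"] by simp

lemma has_integral_vec_componentwise:
  fixes f :: "real \<Rightarrow> real ^ 'n"
  assumes "\<And>i. ((\<lambda>s. f s $ i) has_integral y $ i) S"
  shows "(f has_integral y) S"
proof (rule has_integral_componentwise)
  fix b :: "real ^ 'n" assume "b \<in> Basis"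
  then obtain i where "b = axis i 1" by (auto simp: Basis_vec_def)
  then show "((\<lambda>s. f s \<bullet> b) has_integral y \<bullet> b) S" using assms[of i] by (simp add: inner_axis)
qed

lemma continuous_on_atLeast_from_Icc:
  fixes f :: "real \<Rightarrow> 'a::topological_space"
  assumes "\<And>b. continuous_on {a..b} f"
  shows "continuous_on {a..} f"
  unfolding continuous_on_eq_continuous_within
proof
  fix t assume t: "t \<in> {a..}"
  have "at t within {a..} = at t within {a..t+1}"
    by (rule at_within_nhd[of _ "{..<t+1}"]) (use t in auto)
  moreover have "continuous (at t within {a..t+1}) f"
    using assms[of "t+1"] t by (simp add: continuous_on_eq_continuous_within)
  ultimately show "continuous (at t within {a..}) f" by simp
qed

lemma integral_equation_has_vector_derivative:
  fixes x g :: "real \<Rightarrow> 'a::banach"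
  assumes g: "continuous_on {a..b} g"
    and x: "\<And>s. s \<in> {a..b} \<Longrightarrow> (g has_integral (x s - x a)) {a..s}"
    and s: "s \<in> {a..b}"
  shows "(x has_vector_derivative g s) (at s within {a..b})"
proof -
  have "((\<lambda>s. x a + integral {a..s} g) has_vector_derivative g s) (at s within {a..b})"
    using integral_has_vector_derivative[OF g s] by (auto intro!: derivative_eq_intros)
  moreover have "x r = x a + integral {a..r} g" if "r \<in> {a..b}" for r
    using integral_unique[OF x[OF that]] by simp
  ultimately show ?thesis by (rule has_vector_derivative_transform[OF s, rotated])
qed

lemma admissible_input_const: "admissible_input (\<lambda>_. c)"
  unfolding admissible_input_def by auto

lemma input_norm_const: "input_norm (\<lambda>_. c) = ereal (norm c)"
proof -
  have "emeasure lborel {0::real..1} \<le> emeasure lborel {0::real..}"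
    by (rule emeasure_mono) auto
  then have "emeasure (restrict_space lborel {0::real..}) (space (restrict_space lborel {0..})) \<noteq> 0"
    by (auto simp: space_restrict_space emeasure_restrict_space)
  then show ?thesis unfolding input_norm_def by (rule esssup_const)
qed

lemma admissible_input_mult_indicator_measurable:
  fixes u :: "real \<Rightarrow> real"
  assumes u: "admissible_input u" and c: "continuous_on {0..t} c"
  shows "(\<lambda>s. indicator {0..t} s *\<^sub>R (u s * c s)) \<in> borel_measurable lborel"
proof -
  have "(\<lambda>s. indicator {0..} s *\<^sub>R u s) \<in> borel_measurable lborel"
    using u borel_measurable_restrict_space_iff[of "{0..}" lborel u] by (simp add: admissible_input_def)
  moreover have "(\<lambda>s. indicator {0..t} s *\<^sub>R c s) \<in> borel_measurable borel"
    by (rule borel_measurable_continuous_on_indicator[OF _ c]) auto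
  moreover have "(\<lambda>s. indicator {0..t} s *\<^sub>R (u s * c s))
      = (\<lambda>s. (indicator {0..} s *\<^sub>R u s) * (indicator {0..t} s *\<^sub>R c s))"
    by (auto simp: indicator_def)
  ultimately show ?thesis by (simp add: measurable_lborel1)
qed

lemma admissible_input_mult_integrable_on:
  fixes u :: "real \<Rightarrow> real"
  assumes u: "admissible_input u" and c: "continuous_on {0..t} c"
  shows "(\<lambda>s. u s * c s) integrable_on {0..t}"
proof (cases "0 \<le> t")
  case False
  then show ?thesis by (simp add: integrable_on_empty)
next
  case True
  from u True obtain B where B: "AE s in lborel. s \<in> {0..t} \<longrightarrow> norm (u s) \<le> B"
    unfolding admissible_input_def by blast
  have "compact (c ` {0..t})" by (rule compact_continuous_image[OF c]) auto
  then obtain C where C: "\<forall>y\<in>c ` {0..t}. norm y \<le> C" using compact_imp_bounded bounded_iff by metis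
  have "integrable lborel (\<lambda>s. indicator {0..t} s *\<^sub>R (B * C))"
    by (rule integrable_indicator) (auto simp: emeasure_lborel_Icc_eq)
  then have "integrable lborel (\<lambda>s. indicator {0..t} s *\<^sub>R (u s * c s))"
  proof (rule Bochner_Integration.integrable_bound[OF _ admissible_input_mult_indicator_measurable[OF u c]])
    show "AE s in lborel. norm (indicator {0..t} s *\<^sub>R (u s * c s)) \<le> norm (indicator {0..t} s *\<^sub>R (B * C))"
      using B
    proof eventually_elim
      case (elim s)
      show ?case
      proof (cases "s \<in> {0..t}")
        case True
        then have "\<bar>u s\<bar> \<le> B" "\<bar>c s\<bar> \<le> C" using elim C by auto
        then have "\<bar>u s * c s\<bar> \<le> B * C" by (simp add: abs_mult mult_mono')
        then show ?thesis using True by simp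
      qed simp
    qed
  qed
  then show ?thesis
    by (simp add: set_integrable_def set_borel_integral_eq_integral(1))
qed

lemma class_Kinf_id: "class_Kinf (\<lambda>s. s)"
  unfolding class_Kinf_def class_K_def
proof (intro conjI allI)
  fix M :: real
  show "\<exists>s\<ge>0. M < s" by (rule exI[of _ "max 0 M + 1"]) auto
qed (auto intro: strict_mono_onI)

lemma smooth_nonneg_id: "smooth_nonneg (\<lambda>s. s)"
proof -
  define D where "D k = (if k = 0 then (\<lambda>s::real. s) else if k = 1 then (\<lambda>s. 1) else (\<lambda>s. 0))" for k :: nat
  have "(D k has_real_derivative D (Suc k) s) (at s within {0..})" for k s
    unfolding D_def by (cases "k = 0"; cases "k = 1") (auto intro!: derivative_eq_intros)
  moreover have "D 0 = (\<lambda>s. s)" by (simp add: D_def)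
  ultimately show ?thesis unfolding smooth_nonneg_def by blast
qed

section \<open>Uniqueness for dissipative vector fields\<close>

lemma inner_diff_norm_sq_scaleR_nonneg:
  fixes p q :: "'a::real_inner"
  shows "0 \<le> (p - q) \<bullet> ((norm p)\<^sup>2 *\<^sub>R p - (norm q)\<^sup>2 *\<^sub>R q)"
proof -
  define a b where "a = norm p" and "b = norm q"
  have "p \<bullet> q \<le> a * b" unfolding a_def b_def by (rule norm_cauchy_schwarz)
  moreover have "0 \<le> a\<^sup>2 + b\<^sup>2" by simp
  ultimately have "(a\<^sup>2 + b\<^sup>2) * (p \<bullet> q) \<le> (a\<^sup>2 + b\<^sup>2) * (a * b)" by (rule mult_left_mono)
  moreover have "(p - q) \<bullet> ((norm p)\<^sup>2 *\<^sub>R p - (norm q)\<^sup>2 *\<^sub>R q) = a ^ 4 + b ^ 4 - (a\<^sup>2 + b\<^sup>2) * (p \<bullet> q)"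
    unfolding a_def b_def
    by (simp add: inner_diff_left inner_diff_right inner_commute algebra_simps
        flip: power2_norm_eq_inner)
  moreover have "a ^ 4 + b ^ 4 - (a\<^sup>2 + b\<^sup>2) * (a * b) = (a - b)\<^sup>2 * (a\<^sup>2 + a * b + b\<^sup>2)"
    by (simp add: power2_eq_square power4_eq_xxxx algebra_simps)
  moreover have "0 \<le> (a - b)\<^sup>2 * (a\<^sup>2 + a * b + b\<^sup>2)"
    unfolding a_def b_def by simp
  ultimately show ?thesis by linarith
qed

lemma dissipative_integral_solutions_coincide:
  fixes F :: "'a::euclidean_space \<Rightarrow> 'a" and x y :: "real \<Rightarrow> 'a"
  assumes diss: "\<And>p q. (p - q) \<bullet> (F p - F q) \<le> 0" and F: "continuous_on UNIV F"
    and t: "0 \<le> t"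
    and x: "continuous_on {0..t} x" "\<And>s. s \<in> {0..t} \<Longrightarrow> ((\<lambda>r. F (x r)) has_integral (x s - x 0)) {0..s}"
    and y: "continuous_on {0..t} y" "\<And>s. s \<in> {0..t} \<Longrightarrow> ((\<lambda>r. F (y r)) has_integral (y s - y 0)) {0..s}"
    and xy0: "x 0 = y 0"
  shows "x t = y t"
proof -
  define E where "E s = (x s - y s) \<bullet> (x s - y s)" for s
  define E' where "E' s = 2 * ((x s - y s) \<bullet> (F (x s) - F (y s)))" for s
  have "(E has_derivative (\<lambda>h. h * E' s)) (at s within {0..t})" if s: "s \<in> {0..t}" for s
  proof -
    have "(x has_vector_derivative F (x s)) (at s within {0..t})"
      "(y has_vector_derivative F (y s)) (at s within {0..t})"
      by (intro integral_equation_has_vector_derivative continuous_on_compose2[OF F] x y s; simp)+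
    then have d: "((\<lambda>s. x s - y s) has_derivative (\<lambda>h. h *\<^sub>R (F (x s) - F (y s)))) (at s within {0..t})"
      unfolding has_vector_derivative_def by (auto intro!: derivative_eq_intros simp: scaleR_diff_right)
    show ?thesis unfolding E_def E'_def
      by (rule has_derivative_eq_rhs[OF has_derivative_inner[OF d d]]) (simp add: fun_eq_iff inner_commute)
  qed
  then obtain c where "c \<in> {0..t}" "E t - E 0 = (t - 0) * E' c"
    using mvt_very_simple[OF t, of E "\<lambda>s h. h * E' s"] by auto
  moreover have "E 0 = 0" by (simp add: E_def xy0)
  moreover have "E' c \<le> 0" using diss by (simp add: E'_def)
  ultimately have "E t \<le> 0" using t by (simp add: mult_nonneg_nonpos)
  then have "\<not> 0 < E t" by simp
  then show ?thesis by (simp add: E_def)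
qed

definition damped_rotation :: "complex \<Rightarrow> complex" where
  "damped_rotation z = \<i> * z - (cmod z)\<^sup>2 *\<^sub>R z"

lemma damped_rotation_dissipative: "(p - q) \<bullet> (damped_rotation p - damped_rotation q) \<le> 0"
proof -
  have "damped_rotation p - damped_rotation q = \<i> * (p - q) - ((cmod p)\<^sup>2 *\<^sub>R p - (cmod q)\<^sup>2 *\<^sub>R q)"
    by (simp add: damped_rotation_def algebra_simps)
  moreover have "(p - q) \<bullet> (\<i> * (p - q)) = 0"
    by (simp add: inner_complex_def algebra_simps)
  ultimately show ?thesis
    using inner_diff_norm_sq_scaleR_nonneg[of p q] by (simp add: inner_diff_right)
qed

lemma continuous_on_damped_rotation: "continuous_on UNIV damped_rotation"
  unfolding damped_rotation_def by (intro continuous_intros)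

lemma loc_lipschitz_damped_rotation: "loc_lipschitz damped_rotation"
proof -
  have norm: "loc_lipschitz (\<lambda>z::complex. cmod z)"
    by (rule lipschitz_on_UNIV_imp_loc_lipschitz[of 1])
      (auto intro!: lipschitz_onI simp: dist_norm norm_triangle_ineq3)
  have id: "loc_lipschitz (\<lambda>z::complex. z)"
    by (rule bounded_linear_imp_loc_lipschitz[OF bounded_linear_ident])
  have rot: "loc_lipschitz (\<lambda>z. \<i> * z)"
    by (rule bounded_linear_imp_loc_lipschitz[OF bounded_linear_mult_right])
  have "loc_lipschitz (\<lambda>z. cmod z * cmod z)"
    by (rule loc_lipschitz_bilinear[OF bounded_bilinear_mult norm norm])
  then have "loc_lipschitz (\<lambda>z. (cmod z * cmod z) *\<^sub>R z)"
    by (rule loc_lipschitz_bilinear[OF bounded_bilinear_scaleR _ id])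
  then have "loc_lipschitz (\<lambda>z. \<i> * z - (cmod z * cmod z) *\<^sub>R z)"
    by (rule loc_lipschitz_diff[OF rot])
  then show ?thesis by (simp add: damped_rotation_def[abs_def] power2_eq_square)
qed

definition damped_radius :: "real \<Rightarrow> real \<Rightarrow> real" where
  "damped_radius r t = r / sqrt (1 + 2 * r\<^sup>2 * t)"

lemma damped_radius_mono:
  assumes "0 \<le> a" "a \<le> b" "0 \<le> t"
  shows "damped_radius a t \<le> damped_radius b t"
proof -
  have "a\<^sup>2 * (1 + 2 * b\<^sup>2 * t) \<le> b\<^sup>2 * (1 + 2 * a\<^sup>2 * t)"
    using assms by (simp add: algebra_simps power_mono)
  then have "a\<^sup>2 / (1 + 2 * a\<^sup>2 * t) \<le> b\<^sup>2 / (1 + 2 * b\<^sup>2 * t)"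
    using assms by (simp add: divide_simps add_pos_nonneg)
  then have "sqrt (a\<^sup>2 / (1 + 2 * a\<^sup>2 * t)) \<le> sqrt (b\<^sup>2 / (1 + 2 * b\<^sup>2 * t))"
    by (rule real_sqrt_le_mono)
  then show ?thesis using assms by (simp add: damped_radius_def real_sqrt_divide)
qed

lemma damped_radius_antimono:
  assumes "0 \<le> r" "0 \<le> t" "t \<le> t'"
  shows "damped_radius r t' \<le> damped_radius r t"
proof -
  have "0 < 1 + 2 * r\<^sup>2 * t" "0 < 1 + 2 * r\<^sup>2 * t'"
    using assms by (simp_all add: add_pos_nonneg)
  then show ?thesis
    unfolding damped_radius_def using assms
    by (intro divide_left_mono real_sqrt_le_mono) (auto intro: mult_left_mono)
qed

lemma damped_radius_tendsto_0: "(damped_radius r \<longlongrightarrow> 0) at_top"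
proof (cases "r = 0")
  case True
  then show ?thesis by (simp add: damped_radius_def[abs_def])
next
  case False
  then have "filterlim (\<lambda>t. 1 + 2 * r\<^sup>2 * t) at_top at_top"
    by (intro filterlim_tendsto_add_at_top[OF tendsto_const]
        filterlim_tendsto_pos_mult_at_top[OF tendsto_const] filterlim_ident) simp
  then have "filterlim (\<lambda>t. sqrt (1 + 2 * r\<^sup>2 * t)) at_infinity at_top"
    by (intro filterlim_at_top_imp_at_infinity filterlim_compose[OF sqrt_at_top])
  then show ?thesis
    unfolding damped_radius_def[abs_def] by (rule tendsto_divide_0[OF tendsto_const])
qed

lemma class_KL_sq_mult_damped_radius: "class_KL (\<lambda>s t. s\<^sup>2 * damped_radius s t)"
  unfolding class_KL_def class_K_def
proof (intro conjI allI impI)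
  fix t :: real assume t: "0 \<le> t"
  have "0 < 1 + 2 * s\<^sup>2 * t" for s
    using t by (simp add: add_pos_nonneg)
  then have "sqrt (1 + 2 * s\<^sup>2 * t) \<noteq> 0" for s
    by (metis less_irrefl real_sqrt_eq_zero_cancel_iff)
  then show "continuous_on {0..} (\<lambda>s. s\<^sup>2 * damped_radius s t)"
    unfolding damped_radius_def by (intro continuous_intros) auto
  show "strict_mono_on {0..} (\<lambda>s. s\<^sup>2 * damped_radius s t)"
  proof (rule strict_mono_onI)
    fix a b :: real assume ab: "a \<in> {0..}" "b \<in> {0..}" "a < b"
    have "a\<^sup>2 * damped_radius a t \<le> a\<^sup>2 * damped_radius b t"
      using ab t by (intro mult_left_mono damped_radius_mono) auto
    also have "\<dots> < b\<^sup>2 * damped_radius b t"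
      using ab t by (intro mult_strict_right_mono power_strict_mono)
        (auto simp: damped_radius_def add_pos_nonneg)
    finally show "a\<^sup>2 * damped_radius a t < b\<^sup>2 * damped_radius b t" .
  qed
  show "0\<^sup>2 * damped_radius 0 t = 0" by simp
  show "0 \<le> s\<^sup>2 * damped_radius s t" if "0 \<le> s" for s
    using that t by (simp add: damped_radius_def)
next
  fix s :: real assume s: "0 \<le> s"
  show "antimono_on {0..} (\<lambda>t. s\<^sup>2 * damped_radius s t)"
    using s by (intro monotone_onI mult_left_mono damped_radius_antimono) auto
  show "((\<lambda>t. s\<^sup>2 * damped_radius s t) \<longlongrightarrow> 0) at_top"
    by (rule tendsto_mult_right_zero[OF damped_radius_tendsto_0])
qed

text \<open>The modulus \<open>r\<close> of a solution obeys \<open>r' = -r\<^sup>3\<close>, whence \<open>r t = r\<^sub>0 / sqrt (1 + 2 r\<^sub>0\<^sup>2 t)\<close>,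
  while the argument increases with unit speed.\<close>

definition damped_rotation_flow :: "complex \<Rightarrow> real \<Rightarrow> complex" where
  "damped_rotation_flow z t = (1 / sqrt (1 + 2 * (cmod z)\<^sup>2 * t)) *\<^sub>R (cis t * z)"

lemma damped_rotation_flow_0 [simp]: "damped_rotation_flow z 0 = z"
  by (simp add: damped_rotation_flow_def)

lemma norm_damped_rotation_flow:
  "0 \<le> t \<Longrightarrow> cmod (damped_rotation_flow z t) = damped_radius (cmod z) t"
  by (simp add: damped_rotation_flow_def damped_radius_def norm_mult)

lemma damped_rotation_flow_has_vector_derivative:
  assumes t: "0 \<le> t"
  shows "(damped_rotation_flow z has_vector_derivative damped_rotation (damped_rotation_flow z t)) (at t)"
proof -
  define R where "R = (cmod z)\<^sup>2"
  define \<rho> where "\<rho> = 1 / sqrt (1 + 2 * R * t)"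
  have pos: "0 < 1 + 2 * R * t" using t by (simp add: R_def add_pos_nonneg)
  have "((\<lambda>t. 1 / sqrt (1 + 2 * R * t)) has_real_derivative - R * \<rho> ^ 3) (at t)"
    using pos by (auto intro!: derivative_eq_intros simp: \<rho>_def field_simps power3_eq_cube)
  moreover have "((\<lambda>t. cis t * z) has_vector_derivative (\<i> * cis t * z)) (at t)"
    unfolding has_vector_derivative_def by (auto intro!: derivative_eq_intros simp: fun_eq_iff)
  ultimately have "(damped_rotation_flow z has_vector_derivative
      (\<rho> *\<^sub>R (\<i> * cis t * z) + (- R * \<rho> ^ 3) *\<^sub>R (cis t * z))) (at t)"
    unfolding damped_rotation_flow_def R_def \<rho>_def by (rule has_vector_derivative_scaleR)
  moreover have "\<rho> *\<^sub>R (\<i> * cis t * z) + (- R * \<rho> ^ 3) *\<^sub>R (cis t * z)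
      = damped_rotation (damped_rotation_flow z t)"
  proof -
    have w: "damped_rotation_flow z t = \<rho> *\<^sub>R (cis t * z)"
      by (simp add: damped_rotation_flow_def \<rho>_def R_def)
    have "(cmod (damped_rotation_flow z t))\<^sup>2 = \<rho>\<^sup>2 * R"
      unfolding w by (simp add: norm_mult R_def power_mult_distrib)
    then show ?thesis unfolding damped_rotation_def
      by (simp add: w scaleR_conv_of_real power3_eq_cube power2_eq_square algebra_simps)
  qed
  ultimately show ?thesis by simp
qed

lemma continuous_on_damped_rotation_flow: "continuous_on {0..} (damped_rotation_flow z)"
  by (rule continuous_at_imp_continuous_on)
    (auto intro: has_vector_derivative_continuous damped_rotation_flow_has_vector_derivative)

lemma damped_rotation_flow_has_integral:
  "0 \<le> t \<Longrightarrow>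
    ((\<lambda>s. damped_rotation (damped_rotation_flow z s)) has_integral (damped_rotation_flow z t - z)) {0..t}"
  using fundamental_theorem_of_calculus[of 0 t "damped_rotation_flow z"
      "\<lambda>s. damped_rotation (damped_rotation_flow z s)"]
  by (auto intro: has_vector_derivative_at_within damped_rotation_flow_has_vector_derivative)

lemma has_integral_cos_sq_minus_cos:
  fixes T :: real
  assumes "0 \<le> T"
  shows "((\<lambda>s. (cos s)\<^sup>2 - cos s) has_integral T / 2 + sin (2 * T) / 4 - sin T) {0..T}"
proof -
  have "((\<lambda>s. s / 2 + sin (2 * s) / 4 - sin s) has_real_derivative (cos s)\<^sup>2 - cos s) (at s)" for s
    by (auto intro!: derivative_eq_intros simp: cos_double_cos) (simp add: field_simps)
  then show ?thesis
    using fundamental_theorem_of_calculus[OF assms, of "\<lambda>s. s / 2 + sin (2 * s) / 4 - sin s"]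
    by (simp add: has_real_derivative_iff_has_vector_derivative[symmetric] has_field_derivative_at_within)
qed

lemma half_sq_diff_le_neg_part:
  fixes c :: real
  assumes "-1 \<le> c" "c \<le> 1"
  shows "(c\<^sup>2 - c) / 2 \<le> max (- c) 0"
proof (cases "0 \<le> c")
  case True
  then have "c\<^sup>2 \<le> c" using assms by (simp add: power2_eq_square mult_left_le_one_le)
  then show ?thesis by simp
next
  case False
  then have "c\<^sup>2 \<le> - c" using assms mult_right_mono_neg[of "-1" c c] by (simp add: power2_eq_square)
  then show ?thesis by simp
qed

lemma neg_part_damped_cos_ge:
  fixes s T :: real
  assumes "0 \<le> s" "s \<le> T"
  shows "((cos s)\<^sup>2 - cos s) / 2 / sqrt (1 + 2 * T) \<le> max (- (cos s / sqrt (1 + 2 * s))) 0"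
proof -
  have S: "0 < sqrt (1 + 2 * s)" "sqrt (1 + 2 * s) \<le> sqrt (1 + 2 * T)" using assms by simp_all
  have "((cos s)\<^sup>2 - cos s) / 2 / sqrt (1 + 2 * T) \<le> max (- cos s) 0 / sqrt (1 + 2 * T)"
    using S half_sq_diff_le_neg_part[of "cos s"] by (intro divide_right_mono) auto
  also have "\<dots> \<le> max (- cos s) 0 / sqrt (1 + 2 * s)"
    using S by (intro divide_left_mono mult_pos_pos) auto
  also have "\<dots> = max (- (cos s / sqrt (1 + 2 * s))) 0"
    using S by (simp add: max_divide_distrib_right)
  finally show ?thesis .
qed

text \<open>Minorize the negative part of \<open>cos s\<close> by \<open>(cos\<^sup>2 s - cos s) / 2\<close>, whose integral over
  \<open>[0, T]\<close> is \<open>T / 4\<close> when \<open>sin T = 0\<close>.\<close>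

lemma integral_neg_part_damped_cos_ge:
  fixes T :: real
  assumes T: "0 \<le> T" and sinT: "sin T = 0"
  shows "T / 4 / sqrt (1 + 2 * T) \<le> integral {0..T} (\<lambda>s. max (- (cos s / sqrt (1 + 2 * s))) 0)"
proof -
  have "((\<lambda>s. (cos s)\<^sup>2 - cos s) has_integral T / 2) {0..T}"
    using has_integral_cos_sq_minus_cos[OF T] sinT by (simp add: sin_double)
  from has_integral_divide[OF has_integral_divide[OF this, of 2], of "sqrt (1 + 2 * T)"]
  have lower: "((\<lambda>s. ((cos s)\<^sup>2 - cos s) / 2 / sqrt (1 + 2 * T)) has_integral T / 4 / sqrt (1 + 2 * T)) {0..T}"
    by simp
  have "(\<lambda>s. max (- (cos s / sqrt (1 + 2 * s))) 0) integrable_on {0..T}"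
    by (intro integrable_continuous_interval continuous_intros) auto
  then have "integral {0..T} (\<lambda>s. ((cos s)\<^sup>2 - cos s) / 2 / sqrt (1 + 2 * T))
      \<le> integral {0..T} (\<lambda>s. max (- (cos s / sqrt (1 + 2 * s))) 0)"
    using neg_part_damped_cos_ge by (intro integral_le[OF has_integral_integrable[OF lower]]) auto
  then show ?thesis by (simp only: integral_unique[OF lower])
qed

definition plane :: "real^3 \<Rightarrow> complex" where
  "plane x = Complex (x$1) (x$2)"

lemma Re_plane [simp]: "Re (plane x) = x$1" and Im_plane [simp]: "Im (plane x) = x$2"
  by (simp_all add: plane_def)

lemma plane_vector [simp]: "plane (vector [Re z, Im z, a]) = z"
  by (simp add: plane_def complex_eq_iff)

lemma bounded_linear_plane: "bounded_linear plane"
proof -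
  have "plane = (\<lambda>x. of_real (x$1) + \<i> * of_real (x$2))"
    by (simp add: fun_eq_iff plane_def complex_eq_iff)
  moreover have "bounded_linear (\<lambda>x::real^3. of_real (x$1) + \<i> * of_real (x$2))"
    by (intro bounded_linear_add bounded_linear_compose[OF bounded_linear_mult_right]
        bounded_linear_compose[OF bounded_linear_of_real bounded_linear_vec_nth])
  ultimately show ?thesis by simp
qed

lemma norm_plane_le: "cmod (plane x) \<le> norm x"
proof -
  have "(norm x)\<^sup>2 = (x$1)\<^sup>2 + (x$2)\<^sup>2 + (x$3)\<^sup>2"
    unfolding power2_norm_eq_inner inner_vec_def sum_3 by (simp add: power2_eq_square)
  then have "(cmod (plane x))\<^sup>2 \<le> (norm x)\<^sup>2"
    by (simp add: plane_def cmod_def)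
  then show ?thesis by (simp add: power2_le_iff_abs_le)
qed

definition example_field :: "real^3 \<Rightarrow> real \<Rightarrow> real^3" where
  "example_field x u =
     vector [Re (damped_rotation (plane x)), Im (damped_rotation (plane x)), u * max (- x$1) 0]"

definition example_output :: "real^3 \<Rightarrow> real" where
  "example_output x = (x$3)\<^sup>2 * max (x$1) 0"

definition example_solution :: "(real \<Rightarrow> real) \<Rightarrow> real^3 \<Rightarrow> real \<Rightarrow> real^3" where
  "example_solution u \<xi> t =
     vector [Re (damped_rotation_flow (plane \<xi>) t), Im (damped_rotation_flow (plane \<xi>) t),
       \<xi>$3 + integral {0..t} (\<lambda>s. u s * max (- Re (damped_rotation_flow (plane \<xi>) s)) 0)]"

lemma plane_example_field [simp]: "plane (example_field x u) = damped_rotation (plane x)"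
  by (simp add: example_field_def)

lemma example_solution_is_solution:
  assumes u: "admissible_input u"
  shows "is_solution_on example_field u \<xi> \<infinity> (example_solution u \<xi>)"
proof -
  let ?z = "damped_rotation_flow (plane \<xi>)"
  let ?g = "\<lambda>s. u s * max (- Re (?z s)) 0"
  have cont: "continuous_on {0..t} (\<lambda>s. max (- Re (?z s)) 0)" for t
    by (intro continuous_intros continuous_on_subset[OF continuous_on_damped_rotation_flow]) auto
  note flow_integral = damped_rotation_flow_has_integral[of _ "plane \<xi>"]
  have "((\<lambda>s. example_field (example_solution u \<xi> s) (u s)) has_integral (example_solution u \<xi> t - \<xi>)) {0..t}"
    if t: "0 \<le> t" for t
  proof (rule has_integral_vec_componentwise)
    fix i :: 3
    have "(?g has_integral (integral {0..t} ?g)) {0..t}"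
      using admissible_input_mult_integrable_on[OF u cont] by blast
    then show "((\<lambda>s. example_field (example_solution u \<xi> s) (u s) $ i)
        has_integral (example_solution u \<xi> t - \<xi>) $ i) {0..t}"
      using has_integral_linear[OF flow_integral[OF t] bounded_linear_Re]
        has_integral_linear[OF flow_integral[OF t] bounded_linear_Im] exhaust_3[of i]
      by (auto simp: example_field_def example_solution_def o_def)
  qed
  moreover have "continuous_on {0..} (example_solution u \<xi>)"
  proof (rule continuous_on_vec_componentwise)
    fix i :: 3
    have "continuous_on {0..} (\<lambda>t. integral {0..t} ?g)"
      by (intro continuous_on_atLeast_from_Icc indefinite_integral_continuous_1
          admissible_input_mult_integrable_on[OF u cont])
    moreover have "continuous_on {0..} (\<lambda>t. Re (?z t))" "continuous_on {0..} (\<lambda>t. Im (?z t))"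
      by (intro continuous_intros continuous_on_damped_rotation_flow)+
    ultimately show "continuous_on {0..} (\<lambda>t. example_solution u \<xi> t $ i)"
      using exhaust_3[of i] by (auto simp: example_solution_def intro!: continuous_on_add)
  qed
  moreover have "example_solution u \<xi> 0 = \<xi>"
    by (simp add: example_solution_def vec_eq_iff forall_3)
  moreover have "{t. 0 \<le> t \<and> ereal t < \<infinity>} = {0..}" by auto
  ultimately show ?thesis unfolding is_solution_on_def by auto
qed

lemma example_solution_unique:
  assumes x: "is_solution_on example_field u \<xi> T x" and t: "0 \<le> t" "ereal t < T"
  shows "x t = example_solution u \<xi> t"
proof -
  let ?z = "damped_rotation_flow (plane \<xi>)"
  have before_T: "0 \<le> s \<and> ereal s < T" if "s \<in> {0..t}" for s
    using that le_less_trans[of "ereal s" "ereal t" T] t(2) by simp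
  have x0: "x 0 = \<xi>" using x by (simp add: is_solution_on_def)
  have xc: "continuous_on {0..t} x"
    using x before_T unfolding is_solution_on_def by (blast intro: continuous_on_subset)
  have xi: "((\<lambda>r. example_field (x r) (u r)) has_integral (x s - \<xi>)) {0..s}" if "s \<in> {0..t}" for s
    using x before_T[OF that] by (simp add: is_solution_on_def)
  have planar: "plane (x s) = ?z s" if s: "s \<in> {0..t}" for s
  proof (rule dissipative_integral_solutions_coincide[OF damped_rotation_dissipative
        continuous_on_damped_rotation])
    show "continuous_on {0..s} (\<lambda>r. plane (x r))"
      using s by (intro continuous_on_compose2[OF linear_continuous_on[OF bounded_linear_plane]
          continuous_on_subset[OF xc]]) auto
    show "((\<lambda>r. damped_rotation (plane (x r))) has_integral (plane (x r) - plane (x 0))) {0..r}"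
      if "r \<in> {0..s}" for r
      using has_integral_linear[OF xi bounded_linear_plane, of r] that s x0
      by (simp add: o_def linear_diff[OF bounded_linear.linear[OF bounded_linear_plane]])
    show "continuous_on {0..s} ?z"
      by (rule continuous_on_subset[OF continuous_on_damped_rotation_flow]) auto
    show "((\<lambda>r. damped_rotation (?z r)) has_integral (?z r - ?z 0)) {0..r}" if "r \<in> {0..s}" for r
      using damped_rotation_flow_has_integral[of r] that by simp
  qed (use s x0 in auto)
  have planar_components: "x s $ 1 = Re (?z s)" "x s $ 2 = Im (?z s)" if "s \<in> {0..t}" for s
    using arg_cong[OF planar[OF that], of Re] arg_cong[OF planar[OF that], of Im] by simp_all
  have "((\<lambda>r. u r * max (- x r $ 1) 0) has_integral (x t $ 3 - \<xi> $ 3)) {0..t}"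
    using has_integral_linear[OF xi bounded_linear_vec_nth[of 3], of t] t
    by (simp add: o_def example_field_def)
  then have "((\<lambda>r. u r * max (- Re (?z r)) 0) has_integral (x t $ 3 - \<xi> $ 3)) {0..t}"
    by (rule has_integral_eq[rotated]) (simp add: planar_components)
  then have "x t $ 3 = example_solution u \<xi> t $ 3"
    by (simp add: example_solution_def integral_unique)
  then show ?thesis
    using planar_components[of t] t by (simp add: vec_eq_iff forall_3 example_solution_def)
qed

lemma forward_complete_example_field: "forward_complete example_field"
  unfolding forward_complete_def forward_complete_wrt_def
proof (intro allI impI conjI)
  fix u :: "real \<Rightarrow> real" and \<xi> assume u: "admissible_input u"
  then show "\<exists>x. is_solution_on example_field u \<xi> \<infinity> x"
    using example_solution_is_solution by blast
  fix T x assume "is_solution_on example_field u \<xi> T x"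
  then show "\<exists>x'. is_solution_on example_field u \<xi> \<infinity> x' \<and> (\<forall>t. 0 \<le> t \<and> ereal t < T \<longrightarrow> x' t = x t)"
    using example_solution_is_solution[OF u] example_solution_unique by metis
qed

lemma example_field_feedback:
  assumes "lam 0 = 0"
  shows "example_field x (lam (norm (example_output x)) *\<^sub>R d) = example_field x 0"
  using assms by (cases "x$1 \<le> 0") (auto simp: example_field_def example_output_def)

lemma example_output_zero_input_bound:
  assumes t: "0 \<le> t"
  shows "norm (example_output (example_solution (\<lambda>_. 0) \<xi> t)) \<le> (norm \<xi>)\<^sup>2 * damped_radius (norm \<xi>) t"
proof -
  have "norm (example_output (example_solution (\<lambda>_. 0) \<xi> t))
      = (\<xi>$3)\<^sup>2 * max (Re (damped_rotation_flow (plane \<xi>) t)) 0"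
    by (simp add: example_output_def example_solution_def)
  also have "\<dots> \<le> (norm \<xi>)\<^sup>2 * cmod (damped_rotation_flow (plane \<xi>) t)"
    using component_le_norm_cart[of \<xi> 3] abs_Re_le_cmod[of "damped_rotation_flow (plane \<xi>) t"]
    by (intro mult_mono) (auto simp: power2_le_iff_abs_le)
  also have "\<dots> \<le> (norm \<xi>)\<^sup>2 * damped_radius (norm \<xi>) t"
    using t norm_plane_le[of \<xi>]
    by (simp add: norm_damped_rotation_flow damped_radius_mono mult_left_mono)
  finally show ?thesis .
qed

lemma ROS_example: "ROS example_field example_output"
  unfolding ROS_def Let_def
proof (intro conjI exI)
  have closed_loop:
    "(\<lambda>x d. example_field x (norm (example_output x) *\<^sub>R d)) = (\<lambda>x (d::real). example_field x 0)"
    using example_field_feedback[of "\<lambda>s. s"] by simp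
  have closed_loop_solution:
    "is_solution_on (\<lambda>x (d::real). example_field x 0) d = is_solution_on example_field (\<lambda>_. 0)"
    for d :: "real \<Rightarrow> real"
    by (simp add: fun_eq_iff is_solution_on_def)
  show "forward_complete example_field" by (rule forward_complete_example_field)
  show "class_Kinf (\<lambda>s. s)" by (rule class_Kinf_id)
  show "smooth_nonneg (\<lambda>s. s)" by (rule smooth_nonneg_id)
  show "class_KL (\<lambda>s t. s\<^sup>2 * damped_radius s t)" by (rule class_KL_sq_mult_damped_radius)
  show "forward_complete_wrt admissible_dist (\<lambda>x d. example_field x (norm (example_output x) *\<^sub>R d))"
    using forward_complete_example_field admissible_input_const[of 0]
    unfolding closed_loop forward_complete_def forward_complete_wrt_def closed_loop_solution by blast
  show "\<forall>d \<xi> x t. admissible_dist d \<longrightarrow>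
      is_solution_on (\<lambda>x d. example_field x (norm (example_output x) *\<^sub>R d)) d \<xi> \<infinity> x \<longrightarrow>
      0 \<le> t \<longrightarrow> norm (example_output (x t)) \<le> (norm \<xi>)\<^sup>2 * damped_radius (norm \<xi>) t"
  proof (intro allI impI)
    fix d \<xi> x and t :: real
    assume "is_solution_on (\<lambda>x d. example_field x (norm (example_output x) *\<^sub>R d)) d \<xi> \<infinity> x" "0 \<le> t"
    then have "x t = example_solution (\<lambda>_. 0) \<xi> t"
      using example_solution_unique[of "\<lambda>_. 0" \<xi> \<infinity> x t] unfolding closed_loop closed_loop_solution by simp
    then show "norm (example_output (x t)) \<le> (norm \<xi>)\<^sup>2 * damped_radius (norm \<xi>) t"
      using example_output_zero_input_bound[OF \<open>0 \<le> t\<close>] by simp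
  qed
qed

lemma example_output_full_turns_ge:
  fixes T :: real
  assumes T: "0 \<le> T" "sin T = 0" "cos T = 1"
  shows "(T / 4 / sqrt (1 + 2 * T))\<^sup>2 / sqrt (1 + 2 * T)
    \<le> example_output (example_solution (\<lambda>_. 1) (axis 1 1) T)"
proof -
  have "plane (axis 1 1) = 1" "(axis 1 1 :: real^3) $ 3 = 0"
    by (simp_all add: plane_def axis_def complex_eq_iff)
  then have "example_output (example_solution (\<lambda>_. 1) (axis 1 1) T) = A\<^sup>2 / sqrt (1 + 2 * T)"
    if "A = integral {0..T} (\<lambda>s. max (- (cos s / sqrt (1 + 2 * s))) 0)" for A
    using that T by (simp add: example_output_def example_solution_def damped_rotation_flow_def)
  moreover have "(T / 4 / sqrt (1 + 2 * T))\<^sup>2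
      \<le> (integral {0..T} (\<lambda>s. max (- (cos s / sqrt (1 + 2 * s))) 0))\<^sup>2"
    using T by (intro power_mono integral_neg_part_damped_cos_ge) auto
  ultimately show ?thesis using T(1) by (simp add: divide_right_mono)
qed

lemma example_output_unbounded:
  "filterlim (\<lambda>n::nat. example_output (example_solution (\<lambda>_. 1) (axis 1 1) (2 * real n * pi)))
    at_top sequentially"
proof (rule filterlim_at_top_mono)
  show "filterlim (\<lambda>n::nat.
      (2 * real n * pi / 4 / sqrt (1 + 2 * (2 * real n * pi)))\<^sup>2 / sqrt (1 + 2 * (2 * real n * pi)))
      at_top sequentially"
    by real_asymp
  show "\<forall>\<^sub>F n in sequentially.
      (2 * real n * pi / 4 / sqrt (1 + 2 * (2 * real n * pi)))\<^sup>2 / sqrt (1 + 2 * (2 * real n * pi))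
      \<le> example_output (example_solution (\<lambda>_. 1) (axis 1 1) (2 * real n * pi))"
    by (intro always_eventually allI example_output_full_turns_ge) (simp_all add: sin_2npi cos_2npi)
qed

lemma not_IOS_example: "\<not> IOS example_field example_output"
proof
  assume "IOS example_field example_output"
  then obtain \<beta> \<gamma> where KL: "class_KL \<beta>" and gain: "\<forall>u \<xi> x t. admissible_input u \<longrightarrow> input_norm u < \<infinity> \<longrightarrow>
      is_solution_on example_field u \<xi> \<infinity> x \<longrightarrow> t \<ge> 0 \<longrightarrow>
      norm (example_output (x t)) \<le> \<beta> (norm \<xi>) t + \<gamma> (real_of_ereal (input_norm u))"
    unfolding IOS_def by blast
  have "example_output (example_solution (\<lambda>_. 1) (axis 1 1) t) \<le> \<beta> 1 0 + \<gamma> 1" if t: "0 \<le> t" for t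
  proof -
    have "norm (example_output (example_solution (\<lambda>_. 1) (axis 1 1) t))
        \<le> \<beta> (norm (axis 1 1 :: real^3)) t + \<gamma> (real_of_ereal (input_norm (\<lambda>_::real. 1::real)))"
      by (rule gain[rule_format])
        (simp_all add: t admissible_input_const input_norm_const example_solution_is_solution)
    then have "norm (example_output (example_solution (\<lambda>_. 1) (axis 1 1) t)) \<le> \<beta> 1 t + \<gamma> 1"
      by (simp add: input_norm_const norm_axis_1)
    moreover have "\<beta> 1 t \<le> \<beta> 1 0"
      using KL t unfolding class_KL_def by (auto dest!: spec[of _ 1] intro: monotone_onD)
    ultimately show ?thesis by simp
  qed
  moreover obtain n :: nat
    where "\<beta> 1 0 + \<gamma> 1 < example_output (example_solution (\<lambda>_. 1) (axis 1 1) (2 * real n * pi))"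
    using filterlim_at_top_dense[THEN iffD1, OF example_output_unbounded, rule_format, of "\<beta> 1 0 + \<gamma> 1"]
    by (auto dest: eventually_happens)
  moreover have "0 \<le> 2 * real n * pi" by simp
  ultimately show False by (meson not_le)
qed

lemma loc_lipschitz_example_field: "loc_lipschitz (\<lambda>(x, u). example_field x u)"
proof (rule loc_lipschitz_vec_componentwise)
  fix i :: 3
  have "bounded_linear (\<lambda>p::(real^3) \<times> real. plane (fst p))"
    by (rule bounded_linear_compose[OF bounded_linear_plane bounded_linear_fst])
  from loc_lipschitz_compose[OF bounded_linear_imp_loc_lipschitz[OF this] loc_lipschitz_damped_rotation]
  have rotation: "loc_lipschitz (\<lambda>p::(real^3) \<times> real. damped_rotation (plane (fst p)))" .
  have "bounded_linear (\<lambda>p::(real^3) \<times> real. - fst p $ 1)"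
    by (rule bounded_linear_minus[OF bounded_linear_compose[OF bounded_linear_vec_nth bounded_linear_fst]])
  from loc_lipschitz_compose[OF bounded_linear_imp_loc_lipschitz[OF this] loc_lipschitz_max_0]
  have "loc_lipschitz (\<lambda>p::(real^3) \<times> real. max (- fst p $ 1) 0)" .
  then have "loc_lipschitz (\<lambda>p::(real^3) \<times> real. snd p * max (- fst p $ 1) 0)"
    by (rule loc_lipschitz_bilinear[OF bounded_bilinear_mult
          bounded_linear_imp_loc_lipschitz[OF bounded_linear_snd]])
  moreover have "loc_lipschitz (\<lambda>p::(real^3) \<times> real. Re (damped_rotation (plane (fst p))))"
    by (rule loc_lipschitz_compose[OF rotation bounded_linear_imp_loc_lipschitz[OF bounded_linear_Re]])
  moreover have "loc_lipschitz (\<lambda>p::(real^3) \<times> real. Im (damped_rotation (plane (fst p))))"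
    by (rule loc_lipschitz_compose[OF rotation bounded_linear_imp_loc_lipschitz[OF bounded_linear_Im]])
  ultimately show "loc_lipschitz (\<lambda>p. (case p of (x, u) \<Rightarrow> example_field x u) $ i)"
    using exhaust_3[of i] by (auto simp: example_field_def case_prod_unfold)
qed

lemma loc_lipschitz_example_output: "loc_lipschitz example_output"
proof -
  have nth: "loc_lipschitz (\<lambda>x::real^3. x $ i)" for i
    by (rule bounded_linear_imp_loc_lipschitz[OF bounded_linear_vec_nth])
  have "loc_lipschitz (\<lambda>x::real^3. x $ 3 * x $ 3)"
    by (rule loc_lipschitz_bilinear[OF bounded_bilinear_mult nth nth])
  moreover have "loc_lipschitz (\<lambda>x::real^3. max (x $ 1) 0)"
    by (rule loc_lipschitz_compose[OF nth loc_lipschitz_max_0])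
  ultimately have "loc_lipschitz (\<lambda>x::real^3. x $ 3 * x $ 3 * max (x $ 1) 0)"
    by (rule loc_lipschitz_bilinear[OF bounded_bilinear_mult])
  then show ?thesis by (simp add: example_output_def[abs_def] power2_eq_square)
qed

theorem lemma2p5:
  "\<exists>(f :: real^3 \<Rightarrow> real \<Rightarrow> real^3) (h :: real^3 \<Rightarrow> real).
     loc_lipschitz (\<lambda>(x, u). f x u) \<and> loc_lipschitz h \<and> f 0 0 = 0 \<and> h 0 = 0 \<and>
     ROS f h \<and> \<not> IOS f h"
proof (intro exI conjI)
  show "example_field 0 0 = 0" "example_output 0 = 0"
    by (simp_all add: example_field_def example_output_def damped_rotation_def plane_def vec_eq_iff forall_3)
  show "loc_lipschitz (\<lambda>(x, u). example_field x u)" by (rule loc_lipschitz_example_field)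
  show "loc_lipschitz example_output" by (rule loc_lipschitz_example_output)
  show "ROS example_field example_output" by (rule ROS_example)
  show "\<not> IOS example_field example_output" by (rule not_IOS_example)
qed

end
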